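(* Let $\mathtt{Hol}_{\mathfrak T}$ be a holistic model and $\gamma$ a formula. (1) Suppose an occurrence of $\intercal(\alpha_1,\alpha_2,\alpha_3)$ appears in $Level_i^\gamma$, so that $Level_{i+1}^\gamma=(\beta_1,\dots,\beta_r)$ with $\alpha_1=\beta_{k_1}$, $\alpha_2=\beta_{k_2}$, $\alpha_3=\beta_{k_3}$ the corresponding occurrences ($k_2=k_1+1$, $k_3=k_1+2$). Then $$\mathtt{Hol}^\gamma_{\mathfrak T}(\intercal(\alpha_1,\alpha_2,\alpha_3))={}^{\mathfrak D}\mathtt T_{\mathfrak T}^{(At(\alpha_1),At(\alpha_2),At(\alpha_3))}\Big(Red^{(k_1,k_2,k_3)}_{[At(\beta_1),\dots,At(\beta_r)]}\big(\mathtt{Hol}_{\mathfrak T}(Level_{i+1}^\gamma)\big)\Big).$$ (2) Similarly, if an occurrence of $\alpha_1\uplus\alpha_2$ appears in $Level_i^\gamma$ and $\alpha_1=\beta_{k_1}$, $\alpha_2=\beta_{k_2}$ are the corresponding occurrences in $Level_{i+1}^\gamma=(\beta_1,\dots,\beta_r)$, then $$\mathtt{Hol}^\gamma_{\mathfrak T}(\alpha_1\uplus\alpha_2)={}^{\mathfrak D}\mathtt{XOR}_{\mathfrak T}^{(At(\alpha_1),At(\alpha_2))}\Big(Red^{(k_1,k_2)}_{[At(\beta_1),\dots,At(\beta_r)]}\big(\mathtt{Hol}_{\mathfrak T}(Level_{i+1}^\gamma)\big)\Big).$$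
   Context: Hilbert spaces and states: for $n\ge1$, $\mathcal H^{(n)}=(\mathbb C^2)^{\otimes n}$ with canonical basis $|x_1,\dots,x_n\rangle$ ($x_i\in\{0,1\}$, $|0\rangle=(1,0)$, $|1\rangle=(0,1)$); $\mathfrak D(\mathcal H^{(n)})$ is the set of density operators (qumixes) on $\mathcal H^{(n)}$. A truth-perspective is a unitary $\mathfrak T$ on $\mathbb C^2$, $\mathfrak T^{(n)}=\mathfrak T^{\otimes n}$. $^{\mathfrak T}P_1^{(n)}$ (resp. $^{\mathfrak T}P_0^{(n)}$) is the projection onto the span of the vectors $\mathfrak T^{(n)}|x_1,\dots,x_n\rangle$ with $x_n=1$ (resp. $0$). For $\rho$ on $\mathcal H^{(n_1)}\otimes\cdots\otimes\mathcal H^{(n_t)}$, $Red^{(j_1,\dots,j_s)}_{[n_1,\dots,n_t]}(\rho)$ is the reduced state (partial trace over all factors other than $j_1,\dots,j_s$). Gates (on canonical basis, extended linearly): $\mathtt{NOT}^{(n)}|x_1..x_n\rangle=|x_1..x_{n-1}\rangle\otimes|1-x_n\rangle$; $\sqrt{\mathtt I}^{(n)}|x_1..x_n\rangle=|x_1..x_{n-1}\rangle\otimes\frac1{\sqrt2}((-1)^{x_n}|x_n\rangle+|1-x_n\rangle)$; $\sqrt{\mathtt{NOT}}^{(n)}|x_1..x_n\rangle=|x_1..x_{n-1}\rangle\otimes(\frac{1-i}2|x_n\rangle+\frac{1+i}2|1-x_n\rangle)$; $\mathtt{XOR}^{(m,n)}|x_1..x_m,y_1..y_n\rangle=|x_1..x_m,y_1..y_{n-1}\rangle\otimes|x_m\oplus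 y_n\rangle$; $\mathtt T^{(m,n,p)}|x_1..x_m,y_1..y_n,z_1..z_p\rangle=|x_1..x_m,y_1..y_n,z_1..z_{p-1}\rangle\otimes|x_my_n\oplus z_p\rangle$ ($\oplus$ = addition mod 2). For a gate $G$ on $\mathcal H^{(n)}$: $G_{\mathfrak T}=\mathfrak T^{(n)}G\mathfrak T^{(n)\dagger}$, $^{\mathfrak D}G_{\mathfrak T}(\rho)=G_{\mathfrak T}\rho G_{\mathfrak T}^\dagger$. Language: formulas built from atomic formulas (including distinguished atoms $\mathbf t,\mathbf f$) with unary $\lnot,\sqrt{id},\sqrt\lnot$, binary $\uplus$, ternary $\intercal$. $At(\alpha)$ = number of occurrences of atomic formulas in $\alpha$. Syntactical tree: $Level_1^\alpha=(\alpha)$; $Level_{i+1}^\alpha$ is obtained from $Level_i^\alpha=(\beta_1,\dots,\beta_r)$ by replacing each non-atomic $\beta_j$ by the sequence of its immediate subformulas (its arguments, in order) and keeping atomic $\beta_j$; the last level $Level_h^\alpha$ lists all atomic occurrences. Then $\mathcal H^{(At(\alpha))}=\bigotimes_j\mathcal H^{(At(\beta_j))}$. The $\mathfrak T$-gate $G^\alpha_{\mathfrak T(i)}$ ($1\le i<h$) is the tensor product over $j$ of: identity of $\mathbb C^2$ if $\beta_j$ atomic; $\mathtt{NOT}_{\mathfrak T}^{(At\beta)}$, $\sqrt{\mathtt I}_{\mathfrak T}^{(At\beta)}$, $\sqrt{\mathtt{NOT}}_{\mathfrak T}^{(At\beta)}$ for $\lnot\beta,\sqrt{id}\beta,\sqrt\lnot\beta$;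 $\mathtt{XOR}_{\mathfrak T}^{(At\beta',At\beta'')}$ for $\beta'\uplus\beta''$; $\mathtt T_{\mathfrak T}^{(At\beta',At\beta'',At\beta''')}$ for $\intercal(\beta',\beta'',\beta''')$. Holistic model: a map $\mathtt{Hol}_{\mathfrak T}$ assigning to each level $Level_i^\alpha$ of each formula $\alpha$ a qumix in $\mathfrak D(\mathcal H^{(At(\alpha))})$ such that (a) $\mathtt{Hol}_{\mathfrak T}(Level_i^\alpha)={}^{\mathfrak D}G^\alpha_{\mathfrak T(i)}(\mathtt{Hol}_{\mathfrak T}(Level_{i+1}^\alpha))$ for $1\le i<h$; (b) (normality) for each $\gamma$, with the contextual meaning of the occurrence $\beta_j$ in $Level_i^\gamma=(\beta_1,\dots,\beta_r)$ defined as $Red^{(j)}_{[At\beta_1,\dots,At\beta_r]}(\mathtt{Hol}_{\mathfrak T}(Level_i^\gamma))$, all occurrences of the same subformula $\beta$ in the tree of $\gamma$ have the same contextual meaning, denoted $\mathtt{Hol}^\gamma_{\mathfrak T}(\beta)$; (c) every occurrence of $\mathbf f$ (resp. $\mathbf t$) has contextual meaning $^{\mathfrak T}P_0^{(1)}$ (resp. $^{\mathfrak T}P_1^{(1)}$). *)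

theory Defs
  imports "Jordan_Normal_Form.Matrix"
begin

text \<open>Operators on (C^2)^{tensor n} are complex 2^n x 2^n matrices w.r.t. the canonical
 basis |x_1..x_n>, which is identified with the index sum_k x_k 2^(n-k)
 (x_1 most significant).  Tensor products are Kronecker products, first factor
 most significant, matching this ordering.\<close>

definition adj :: "complex mat \<Rightarrow> complex mat" where
  "adj A = mat (dim_col A) (dim_row A) (\<lambda>(i,j). cnj (A $$ (j,i)))"

definition tr :: "complex mat \<Rightarrow> complex" where
  "tr A = (\<Sum>i<dim_row A. A $$ (i,i))"

definition unitary_mat :: "nat \<Rightarrow> complex mat \<Rightarrow> bool" where
  "unitary_mat d U \<longleftrightarrow> U \<in> carrier_mat d d \<and> adj U * U = 1\<^sub>m d \<and> U * adj U = 1\<^sub>m d"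

definition density :: "nat \<Rightarrow> complex mat \<Rightarrow> bool" where
  "density d \<rho> \<longleftrightarrow> \<rho> \<in> carrier_mat d d \<and>
     (\<forall>v \<in> carrier_vec d. Im (conjugate v \<bullet> (\<rho> *\<^sub>v v)) = 0 \<and> 0 \<le> Re (conjugate v \<bullet> (\<rho> *\<^sub>v v))) \<and>
     tr \<rho> = 1"

definition kron :: "complex mat \<Rightarrow> complex mat \<Rightarrow> complex mat" where
  "kron A B = mat (dim_row A * dim_row B) (dim_col A * dim_col B)
     (\<lambda>(i,j). A $$ (i div dim_row B, j div dim_col B) * B $$ (i mod dim_row B, j mod dim_col B))"

definition kron_list :: "complex mat list \<Rightarrow> complex mat" where
  "kron_list As = foldr kron As (1\<^sub>m 1)"

definition kron_pow :: "complex mat \<Rightarrow> nat \<Rightarrow> complex mat" where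
  "kron_pow A n = kron_list (replicate n A)"

definition app_gate :: "complex mat \<Rightarrow> complex mat \<Rightarrow> complex mat" where
  "app_gate G \<rho> = G * \<rho> * adj G"

definition persp :: "complex mat \<Rightarrow> nat \<Rightarrow> complex mat \<Rightarrow> complex mat" where
  "persp T n G = kron_pow T n * G * adj (kron_pow T n)"

text \<open>Projection onto span of the vectors T^(n)|x_1..x_n> with x_n = b
  (these vectors are orthonormal since T^(n) is unitary, so the projection is
  T^(n) D_b T^(n)^dagger with D_b the diagonal projection onto the basis vectors with x_n = b).\<close>
definition projP :: "complex mat \<Rightarrow> nat \<Rightarrow> nat \<Rightarrow> complex mat" where
  "projP T b n = kron_pow T n *
     mat (2^n) (2^n) (\<lambda>(r,c). if r = c \<and> c mod 2 = b then 1 else 0) * adj (kron_pow T n)"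

definition perm_mat :: "nat \<Rightarrow> (nat \<Rightarrow> nat) \<Rightarrow> complex mat" where
  "perm_mat d f = mat d d (\<lambda>(r,c). if r = f c then 1 else 0)"

text \<open>In index c, the last qubit x_n is c mod 2 and the first n-1 qubits are c div 2.\<close>
definition NOT_g :: "nat \<Rightarrow> complex mat" where
  "NOT_g n = perm_mat (2^n) (\<lambda>c. 2 * (c div 2) + (1 - c mod 2))"

definition SqrtI_g :: "nat \<Rightarrow> complex mat" where
  "SqrtI_g n = mat (2^n) (2^n) (\<lambda>(r,c).
     if r div 2 = c div 2 then
       (if r mod 2 = c mod 2 then (-1) ^ (c mod 2) / complex_of_real (sqrt 2)
        else 1 / complex_of_real (sqrt 2))
     else 0)"

definition SqrtNOT_g :: "nat \<Rightarrow> complex mat" where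
  "SqrtNOT_g n = mat (2^n) (2^n) (\<lambda>(r,c).
     if r div 2 = c div 2 then
       (if r mod 2 = c mod 2 then (1 - \<i>) / 2 else (1 + \<i>) / 2)
     else 0)"

text \<open>XOR^(m,n): index c = x * 2^n + y with x < 2^m, y < 2^n; x_m = x mod 2, y_n = y mod 2.\<close>
definition XOR_g :: "nat \<Rightarrow> nat \<Rightarrow> complex mat" where
  "XOR_g m n = perm_mat (2^(m+n)) (\<lambda>c.
     let x = c div 2^n; y = c mod 2^n in
     x * 2^n + (2 * (y div 2) + ((x mod 2 + y mod 2) mod 2)))"

text \<open>Toffoli T^(m,n,p): index c = (x * 2^n + y) * 2^p + z.\<close>
definition Tof_g :: "nat \<Rightarrow> nat \<Rightarrow> nat \<Rightarrow> complex mat" where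
  "Tof_g m n p = perm_mat (2^(m+n+p)) (\<lambda>c.
     let x = c div 2^(n+p); y = (c div 2^p) mod 2^n; z = c mod 2^p in
     (x * 2^n + y) * 2^p + (2 * (z div 2) + ((x mod 2 * (y mod 2) + z mod 2) mod 2)))"

datatype form = Atom nat | TT | FF | Neg form | SqId form | SqNeg form
  | Xor form form | Tof form form form

fun is_atomic :: "form \<Rightarrow> bool" where
  "is_atomic (Atom _) = True" | "is_atomic TT = True" | "is_atomic FF = True"
| "is_atomic _ = False"

fun At :: "form \<Rightarrow> nat" where
  "At (Atom _) = 1" | "At TT = 1" | "At FF = 1"
| "At (Neg a) = At a" | "At (SqId a) = At a" | "At (SqNeg a) = At a"
| "At (Xor a b) = At a + At b" | "At (Tof a b c) = At a + At b + At c"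

fun expand1 :: "form \<Rightarrow> form list" where
  "expand1 (Neg a) = [a]" | "expand1 (SqId a) = [a]" | "expand1 (SqNeg a) = [a]"
| "expand1 (Xor a b) = [a, b]" | "expand1 (Tof a b c) = [a, b, c]"
| "expand1 a = [a]"

definition expand :: "form list \<Rightarrow> form list" where
  "expand L = concat (map expand1 L)"

text \<open>Level_i^alpha, for i \<ge> 1 (Level_1 = (alpha)).\<close>
definition level :: "form \<Rightarrow> nat \<Rightarrow> form list" where
  "level \<alpha> i = (expand ^^ (i - 1)) [\<alpha>]"

fun height :: "form \<Rightarrow> nat" where
  "height (Neg a) = Suc (height a)" | "height (SqId a) = Suc (height a)"
| "height (SqNeg a) = Suc (height a)"
| "height (Xor a b) = Suc (max (height a) (height b))"
| "height (Tof a b c) = Suc (max (height a) (max (height b) (height c)))"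
| "height _ = 1"

text \<open>Position in Level_{i+1} of the first argument of the occurrence at position j of Level_i.\<close>
definition child_pos :: "form list \<Rightarrow> nat \<Rightarrow> nat" where
  "child_pos L j = length (concat (map expand1 (take j L)))"

fun local_gate :: "complex mat \<Rightarrow> form \<Rightarrow> complex mat" where
  "local_gate T (Neg a) = persp T (At a) (NOT_g (At a))"
| "local_gate T (SqId a) = persp T (At a) (SqrtI_g (At a))"
| "local_gate T (SqNeg a) = persp T (At a) (SqrtNOT_g (At a))"
| "local_gate T (Xor a b) = persp T (At a + At b) (XOR_g (At a) (At b))"
| "local_gate T (Tof a b c) = persp T (At a + At b + At c) (Tof_g (At a) (At b) (At c))"
| "local_gate T _ = 1\<^sub>m 2"

definition level_gate :: "complex mat \<Rightarrow> form \<Rightarrow> nat \<Rightarrow> complex mat" where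
  "level_gate T \<alpha> i = kron_list (map (local_gate T) (level \<alpha> i))"

text \<open>Mixed-radix encoding of a digit tuple (first digit most significant).\<close>
definition enc :: "nat list \<Rightarrow> nat list \<Rightarrow> nat" where
  "enc ds xs = foldl (\<lambda>acc (d, x). acc * d + x) 0 (zip ds xs)"

definition tuples :: "nat list \<Rightarrow> nat list set" where
  "tuples ds = {xs. length xs = length ds \<and> (\<forall>l < length ds. xs ! l < ds ! l)}"

text \<open>Red^{(J)}_{[n_1..n_t]}(rho): partial trace over all factors whose (0-based) index
  is not in J; J is the list of kept factors in increasing order.\<close>
definition Red :: "nat list \<Rightarrow> nat list \<Rightarrow> complex mat \<Rightarrow> complex mat" where
  "Red ns J \<rho> = (let ds = map (\<lambda>n. 2 ^ n) ns; D = prod_list (map (\<lambda>l. ds ! l) J) in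
     mat D D (\<lambda>(a, b). \<Sum>(xs, ys) \<in> {(xs, ys). xs \<in> tuples ds \<and> ys \<in> tuples ds \<and>
          (\<forall>l < length ds. l \<notin> set J \<longrightarrow> xs ! l = ys ! l) \<and>
          enc (map (\<lambda>l. ds ! l) J) (map (\<lambda>l. xs ! l) J) = a \<and>
          enc (map (\<lambda>l. ds ! l) J) (map (\<lambda>l. ys ! l) J) = b}.
        \<rho> $$ (enc ds xs, enc ds ys)))"

text \<open>Contextual meaning of the occurrence at (0-based) position j of Level_i^gamma.\<close>
definition ctx :: "(form \<Rightarrow> nat \<Rightarrow> complex mat) \<Rightarrow> form \<Rightarrow> nat \<Rightarrow> nat \<Rightarrow> complex mat" where
  "ctx Hol \<gamma> i j = Red (map At (level \<gamma> i)) [j] (Hol \<gamma> i)"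

definition occs :: "form \<Rightarrow> form \<Rightarrow> (nat \<times> nat) set" where
  "occs \<gamma> \<beta> = {(i, j). 1 \<le> i \<and> i \<le> height \<gamma> \<and> j < length (level \<gamma> i) \<and> level \<gamma> i ! j = \<beta>}"

definition holistic :: "complex mat \<Rightarrow> (form \<Rightarrow> nat \<Rightarrow> complex mat) \<Rightarrow> bool" where
  "holistic T Hol \<longleftrightarrow>
     (\<forall>\<alpha> i. 1 \<le> i \<and> i \<le> height \<alpha> \<longrightarrow> density (2 ^ At \<alpha>) (Hol \<alpha> i)) \<and>
     (\<forall>\<alpha> i. 1 \<le> i \<and> i < height \<alpha> \<longrightarrow>
        Hol \<alpha> i = app_gate (level_gate T \<alpha> i) (Hol \<alpha> (Suc i))) \<and>
     (\<forall>\<gamma> \<beta> i j i' j'. (i, j) \<in> occs \<gamma> \<beta> \<and> (i', j') \<in> occs \<gamma> \<beta> \<longrightarrow>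
        ctx Hol \<gamma> i j = ctx Hol \<gamma> i' j') \<and>
     (\<forall>\<gamma> i j. (i, j) \<in> occs \<gamma> FF \<longrightarrow> ctx Hol \<gamma> i j = projP T 0 1) \<and>
     (\<forall>\<gamma> i j. (i, j) \<in> occs \<gamma> TT \<longrightarrow> ctx Hol \<gamma> i j = projP T 1 1)"

text \<open>Hol^gamma_T(beta): the common contextual meaning of the occurrences of beta in gamma.\<close>
definition Hol_sub :: "(form \<Rightarrow> nat \<Rightarrow> complex mat) \<Rightarrow> form \<Rightarrow> form \<Rightarrow> complex mat" where
  "Hol_sub Hol \<gamma> \<beta> = (let (i, j) = (SOME p. p \<in> occs \<gamma> \<beta>) in ctx Hol \<gamma> i j)"

end

theory Submission
  imports Defs "Jordan_Normal_Form.Determinant"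
begin

text \<open>
  Write the level-i state as \<open>G \<rho> G\<^sup>\<dagger>\<close> with \<open>\<rho>\<close> the level-(i+1) state and
  \<open>G = A \<otimes> G\<^sub>\<beta> \<otimes> B\<close>, where \<open>G\<^sub>\<beta>\<close> is the gate of the occurrence \<open>\<beta>\<close> and \<open>A\<close>, \<open>B\<close>
  are the tensor products of the gates of the other occurrences of that level. The contextual
  meaning of \<open>\<beta>\<close> traces out the factors on which \<open>A\<close> and \<open>B\<close> act, and a partial trace is
  blind to a unitary acting on the traced factor (the columns of a unitary are orthonormal).
  What remains is \<open>G\<^sub>\<beta>\<close> applied to the partial trace of \<open>\<rho>\<close> over everything outside the
  block of children of \<open>\<beta>\<close>, i.e. to the reduced state of that block; by normality every
  occurrence of \<open>\<beta>\<close> has this contextual meaning. All gates are unitary because NOT, XOR and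
  Toffoli permute basis vectors by an involution and \<open>\<surd>I\<close>, \<open>\<surd>NOT\<close> act on the last qubit only.
\<close>

lemma sum_lessThan_mult:
  fixes f :: "nat \<Rightarrow> 'a::comm_monoid_add"
  shows "(\<Sum>k<P * M. f k) = (\<Sum>p<P. \<Sum>q<M. f (p * M + q))"
proof -
  have "(\<Sum>k\<in>{p * M..<p * M + M}. f k) = (\<Sum>q<M. f (p * M + q))" for p
  proof -
    have "{p * M..<p * M + M} = (+) (p * M) ` {..<M}"
      by (simp add: lessThan_atLeast0 add.commute)
    then show ?thesis by (simp add: sum.reindex)
  qed
  then show ?thesis by (simp add: sum.nat_group[symmetric])
qed

lemma mult_add_less_mult:
  fixes p q P M :: nat
  assumes "p < P" "q < M"
  shows "p * M + q < P * M"
proof -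
  have "p * M + q < Suc p * M" using assms(2) by simp
  also have "\<dots> \<le> P * M" using assms(1) by (intro mult_le_mono1) simp
  finally show ?thesis .
qed

lemma mult_add_div_mod:
  fixes p q M :: nat
  assumes "q < M"
  shows "(p * M + q) div M = p" "(p * M + q) mod M = q"
  using assms by simp_all

lemma div_mod_less_mult:
  fixes i a b :: nat
  assumes "i < a * b"
  shows "i div b < a" "i mod b < b"
  using assms by (auto simp: less_mult_imp_div_less) (cases "b = 0"; simp)

lemma adj_dim [simp]: "dim_row (adj A) = dim_col A" "dim_col (adj A) = dim_row A"
  by (simp_all add: adj_def)

lemma adj_index [simp]: "i < dim_col A \<Longrightarrow> j < dim_row A \<Longrightarrow> adj A $$ (i, j) = cnj (A $$ (j, i))"
  by (simp add: adj_def)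

lemma adj_carrier_mat: "A \<in> carrier_mat m n \<Longrightarrow> adj A \<in> carrier_mat n m"
  by auto

lemma adj_adj [simp]: "adj (adj A) = A"
  by (rule eq_matI) auto

lemma adj_one [simp]: "adj (1\<^sub>m n) = 1\<^sub>m n"
  by (rule eq_matI) auto

lemma adj_mult:
  assumes "A \<in> carrier_mat m n" "B \<in> carrier_mat n k"
  shows "adj (A * B) = adj B * adj A"
  using assms by (intro eq_matI) (auto simp: scalar_prod_def intro!: sum.cong)

lemma kron_dim [simp]:
  "dim_row (kron A B) = dim_row A * dim_row B" "dim_col (kron A B) = dim_col A * dim_col B"
  by (simp_all add: kron_def)

lemma kron_index [simp]:
  "i < dim_row A * dim_row B \<Longrightarrow> j < dim_col A * dim_col B \<Longrightarrow>
   kron A B $$ (i, j) = A $$ (i div dim_row B, j div dim_col B) * B $$ (i mod dim_row B, j mod dim_col B)"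
  by (simp add: kron_def)

lemma adj_kron: "adj (kron A B) = kron (adj A) (adj B)"
  by (rule eq_matI) (auto simp: div_mod_less_mult)

lemma kron_one: "kron (1\<^sub>m a) (1\<^sub>m b) = 1\<^sub>m (a * b)"
proof (rule eq_matI)
  fix i j assume "i < dim_row (1\<^sub>m (a * b))" "j < dim_col (1\<^sub>m (a * b) :: complex mat)"
  then have "i < a * b" "j < a * b" by auto
  moreover have "i div b = j div b \<and> i mod b = j mod b \<longleftrightarrow> i = j"
    by (metis div_mult_mod_eq)
  ultimately show "kron (1\<^sub>m a) (1\<^sub>m b) $$ (i, j) = 1\<^sub>m (a * b) $$ (i, j)"
    by (auto simp: div_mod_less_mult)
qed auto

lemma kron_one_left [simp]: "kron (1\<^sub>m (Suc 0)) B = B"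
  by (rule eq_matI) auto

lemma div_mod_mult2:
  fixes i b c :: nat
  shows "i div (b * c) = i div c div b" "i mod (b * c) div c = i div c mod b" "i mod (b * c) mod c = i mod c"
  by (cases "c = 0"; simp add: div_mult2_eq mod_mult2_eq mult.commute[of b c])+

lemma kron_assoc: "kron A (kron B C) = kron (kron A B) C"
proof (rule eq_matI)
  fix i j
  assume "i < dim_row (kron (kron A B) C)" "j < dim_col (kron (kron A B) C)"
  then have i: "i < dim_row A * (dim_row B * dim_row C)" and j: "j < dim_col A * (dim_col B * dim_col C)"
    by (simp_all add: mult.assoc)
  have "i mod (dim_row B * dim_row C) < dim_row B * dim_row C"
    "j mod (dim_col B * dim_col C) < dim_col B * dim_col C"
    using div_mod_less_mult(2) i j by blast+
  with i j show "kron A (kron B C) $$ (i, j) = kron (kron A B) C $$ (i, j)"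
    by (simp add: div_mod_less_mult div_mod_mult2 mult.assoc)
qed (simp_all add: mult.assoc)

lemma kron_mult:
  assumes A: "A \<in> carrier_mat a n" and C: "C \<in> carrier_mat n c"
    and B: "B \<in> carrier_mat b m" and D: "D \<in> carrier_mat m d"
  shows "kron A B * kron C D = kron (A * C) (B * D)"
proof (rule eq_matI)
  fix i j assume "i < dim_row (kron (A * C) (B * D))" "j < dim_col (kron (A * C) (B * D))"
  then have i: "i < a * b" and j: "j < c * d" using assms by auto
  have "(kron A B * kron C D) $$ (i, j) = (\<Sum>k<n * m. kron A B $$ (i, k) * kron C D $$ (k, j))"
    using assms i j by (simp add: scalar_prod_def lessThan_atLeast0)
  also have "\<dots> = (\<Sum>p<n. \<Sum>q<m. (A $$ (i div b, p) * C $$ (p, j div d)) * (B $$ (i mod b, q) * D $$ (q, j mod d)))"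
    unfolding sum_lessThan_mult
  proof (intro sum.cong refl)
    fix p q assume "p \<in> {..<n}" "q \<in> {..<m}"
    then have "(p * m + q) div m = p" "(p * m + q) mod m = q" "p * m + q < n * m"
      by (auto intro: mult_add_less_mult)
    then show "kron A B $$ (i, p * m + q) * kron C D $$ (p * m + q, j) =
      (A $$ (i div b, p) * C $$ (p, j div d)) * (B $$ (i mod b, q) * D $$ (q, j mod d))"
      using assms i j by (simp add: mult_ac)
  qed
  also have "\<dots> = kron (A * C) (B * D) $$ (i, j)"
    using assms i j by (simp add: div_mod_less_mult scalar_prod_def lessThan_atLeast0 sum_product)
  finally show "(kron A B * kron C D) $$ (i, j) = kron (A * C) (B * D) $$ (i, j)" .
qed (use assms in auto)

lemma kron_list_simps [simp]:
  "kron_list [] = 1\<^sub>m 1" "kron_list (A # As) = kron A (kron_list As)"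
  by (simp_all add: kron_list_def)

lemma kron_list_append: "kron_list (As @ Bs) = kron (kron_list As) (kron_list Bs)"
  by (induction As) (simp_all add: kron_assoc)

lemma unitary_matI:
  assumes U: "U \<in> carrier_mat d d" and "adj U * U = 1\<^sub>m d"
  shows "unitary_mat d U"
  using assms mat_mult_left_right_inverse[OF adj_carrier_mat[OF U] U] by (simp add: unitary_mat_def)

lemma unitary_mat_adj: "unitary_mat d U \<Longrightarrow> unitary_mat d (adj U)"
  by (auto simp: unitary_mat_def)

lemma unitary_mat_one: "unitary_mat d (1\<^sub>m d)"
  by (simp add: unitary_mat_def)

lemma unitary_mat_mult:
  assumes A: "unitary_mat d A" and B: "unitary_mat d B"
  shows "unitary_mat d (A * B)"
proof (rule unitary_matI)
  have c: "A \<in> carrier_mat d d" "B \<in> carrier_mat d d" "adj A \<in> carrier_mat d d" "adj B \<in> carrier_mat d d"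
    using A B by (auto simp: unitary_mat_def)
  then have "adj (A * B) * (A * B) = adj B * (adj A * A) * B"
    by (simp add: adj_mult assoc_mult_mat[of _ d d _ d _ d])
  then show "adj (A * B) * (A * B) = 1\<^sub>m d"
    using A B c by (simp add: unitary_mat_def)
qed (use A B in \<open>auto simp: unitary_mat_def\<close>)

lemma unitary_mat_kron:
  assumes A: "unitary_mat a A" and B: "unitary_mat b B"
  shows "unitary_mat (a * b) (kron A B)"
proof (rule unitary_matI)
  have c: "A \<in> carrier_mat a a" "B \<in> carrier_mat b b"
    using A B by (auto simp: unitary_mat_def)
  then show "adj (kron A B) * kron A B = 1\<^sub>m (a * b)"
    using A B by (simp add: adj_kron kron_mult[OF adj_carrier_mat _ adj_carrier_mat] kron_one unitary_mat_def)
qed (use A B in \<open>auto simp: unitary_mat_def\<close>)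

lemma unitary_mat_kron_list:
  "(\<And>x. x \<in> set xs \<Longrightarrow> unitary_mat (f x) (g x)) \<Longrightarrow>
   unitary_mat (\<Prod>x\<leftarrow>xs. f x) (kron_list (map g xs))"
  by (induction xs) (simp_all add: unitary_mat_kron flip: One_nat_def, simp add: unitary_mat_one)

lemma unitary_mat_kron_pow: "unitary_mat 2 T \<Longrightarrow> unitary_mat (2 ^ n) (kron_pow T n)"
  using unitary_mat_kron_list[of "replicate n T" "\<lambda>_. 2" id]
  by (simp add: kron_pow_def prod_list_replicate)

lemma unitary_mat_persp:
  "unitary_mat 2 T \<Longrightarrow> unitary_mat (2 ^ n) G \<Longrightarrow> unitary_mat (2 ^ n) (persp T n G)"
  unfolding persp_def by (intro unitary_mat_mult unitary_mat_adj unitary_mat_kron_pow)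

lemma unitary_mat_cols_orthonormal:
  assumes "unitary_mat d U" "p < d" "q < d"
  shows "(\<Sum>a<d. U $$ (a, p) * cnj (U $$ (a, q))) = (if p = q then 1 else 0)"
proof -
  have "U \<in> carrier_mat d d" using assms(1) by (simp add: unitary_mat_def)
  then have "(\<Sum>a<d. cnj (U $$ (a, q)) * U $$ (a, p)) = (adj U * U) $$ (q, p)"
    using assms(2,3) by (simp add: scalar_prod_def lessThan_atLeast0)
  also have "\<dots> = (if p = q then 1 else 0)"
    using assms by (auto simp: unitary_mat_def)
  finally show ?thesis by (simp add: mult.commute)
qed

section \<open>Unitarity of the gates\<close>

lemma unitary_perm_mat:
  assumes f: "\<And>c. c < d \<Longrightarrow> f c < d" and inv: "\<And>c. c < d \<Longrightarrow> f (f c) = c"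
  shows "unitary_mat d (perm_mat d f)"
proof (rule unitary_matI)
  show "adj (perm_mat d f) * perm_mat d f = 1\<^sub>m d"
  proof (rule eq_matI)
    fix i j assume "i < dim_row (1\<^sub>m d :: complex mat)" "j < dim_col (1\<^sub>m d :: complex mat)"
    then have i: "i < d" and j: "j < d" by auto
    have "(adj (perm_mat d f) * perm_mat d f) $$ (i, j) = (\<Sum>r<d. cnj (perm_mat d f $$ (r, i)) * perm_mat d f $$ (r, j))"
      using i j by (simp add: perm_mat_def scalar_prod_def lessThan_atLeast0)
    also have "\<dots> = (\<Sum>r<d. if r = f i then (if f i = f j then 1 else 0) else 0)"
      using i j by (intro sum.cong) (auto simp: perm_mat_def)
    also have "\<dots> = (if f i = f j then 1 else 0)"
      using f[OF i] by (simp add: sum.delta)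
    also have "\<dots> = 1\<^sub>m d $$ (i, j)"
      using i j inv by (metis index_one_mat(1))
    finally show "(adj (perm_mat d f) * perm_mat d f) $$ (i, j) = 1\<^sub>m d $$ (i, j)" .
  qed (auto simp: perm_mat_def)
qed (simp add: perm_mat_def)

text \<open>In the index \<open>c\<close> of a basis vector, \<open>c mod 2\<close> is the last qubit and \<open>c div 2\<close> encodes
  the others; \<open>controlled_flip b\<close> flips the last qubit iff \<open>b\<close> of the others is odd.\<close>

definition controlled_flip :: "(nat \<Rightarrow> nat) \<Rightarrow> nat \<Rightarrow> nat" where
  "controlled_flip b c = 2 * (c div 2) + (b (c div 2) + c mod 2) mod 2"

lemma controlled_flip_involution: "controlled_flip b (controlled_flip b c) = c"
proof -
  have "(b (c div 2) + (b (c div 2) + c mod 2) mod 2) mod 2 = c mod 2"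
    by presburger
  then show ?thesis by (simp add: controlled_flip_def)
qed

lemma controlled_flip_less:
  assumes "0 < n" "c < 2 ^ n"
  shows "controlled_flip b c < 2 ^ n"
proof -
  obtain k where n: "n = Suc k" using assms(1) by (cases n) auto
  have "c div 2 < 2 ^ k" using assms(2) n by (simp add: less_mult_imp_div_less)
  then show ?thesis by (simp add: controlled_flip_def n)
qed

lemma unitary_controlled_flip:
  "0 < n \<Longrightarrow> unitary_mat (2 ^ n) (perm_mat (2 ^ n) (controlled_flip b))"
  by (intro unitary_perm_mat controlled_flip_less controlled_flip_involution)

lemma div_two_pow_pos: "0 < p \<Longrightarrow> (c::nat) div 2 ^ p = c div 2 div 2 ^ (p - 1)"
  by (cases p) (simp_all add: div_mult2_eq)

lemma two_pow_div_mod_split: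
  fixes c :: nat
  assumes "0 < p"
  shows "c div 2 ^ p * 2 ^ p + 2 * (c mod 2 ^ p div 2) = 2 * (c div 2)"
    and "c mod 2 ^ p mod 2 = c mod 2"
proof -
  obtain k where p: "p = Suc k" using assms by (cases p) auto
  have "c mod 2 ^ p div 2 = c div 2 mod 2 ^ k"
    using div_mod_mult2(2)[of c "2 ^ k" 2] by (simp add: p mult.commute)
  then have "c div 2 ^ p * 2 ^ p + 2 * (c mod 2 ^ p div 2) =
      2 * (c div 2 mod 2 ^ k) + 2 * (2 ^ k * (c div 2 div 2 ^ k))"
    by (simp add: p div_mult2_eq)
  then show "c div 2 ^ p * 2 ^ p + 2 * (c mod 2 ^ p div 2) = 2 * (c div 2)"
    using mult_div_mod_eq[of "2 ^ k" "c div 2"] by linarith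
  show "c mod 2 ^ p mod 2 = c mod 2"
    using assms by (simp add: mod_mod_cancel)
qed

lemma NOT_g_controlled_flip: "NOT_g n = perm_mat (2 ^ n) (controlled_flip (\<lambda>_. 1))"
proof -
  have "(\<lambda>c. 2 * (c div 2) + (1 - c mod 2)) = controlled_flip (\<lambda>_. 1)"
  proof (rule ext)
    fix c :: nat
    have "1 - c mod 2 = (1 + c mod 2) mod 2" by presburger
    then show "2 * (c div 2) + (1 - c mod 2) = controlled_flip (\<lambda>_. 1) c"
      by (simp only: controlled_flip_def)
  qed
  then show ?thesis by (simp only: NOT_g_def)
qed

lemma XOR_g_controlled_flip:
  assumes "0 < n"
  shows "XOR_g m n = perm_mat (2 ^ (m + n)) (controlled_flip (\<lambda>q. q div 2 ^ (n - 1) mod 2))"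
proof -
  have "(\<lambda>c. let x = c div 2 ^ n; y = c mod 2 ^ n in x * 2 ^ n + (2 * (y div 2) + (x mod 2 + y mod 2) mod 2)) =
    controlled_flip (\<lambda>q. q div 2 ^ (n - 1) mod 2)"
  proof (rule ext)
    fix c :: nat
    show "(let x = c div 2 ^ n; y = c mod 2 ^ n in x * 2 ^ n + (2 * (y div 2) + (x mod 2 + y mod 2) mod 2)) =
      controlled_flip (\<lambda>q. q div 2 ^ (n - 1) mod 2) c"
      by (simp only: Let_def controlled_flip_def add.assoc[symmetric] two_pow_div_mod_split[OF assms]
          div_two_pow_pos[OF assms, symmetric])
  qed
  then show ?thesis by (simp only: XOR_g_def)
qed

lemma Tof_g_controlled_flip:
  assumes "0 < p"
  shows "Tof_g m n p = perm_mat (2 ^ (m + n + p))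
    (controlled_flip (\<lambda>q. q div 2 ^ (n + p - 1) mod 2 * (q div 2 ^ (p - 1) mod 2 ^ n mod 2)))"
proof -
  have np: "0 < n + p" using assms by simp
  have "(\<lambda>c. let x = c div 2 ^ (n + p); y = c div 2 ^ p mod 2 ^ n; z = c mod 2 ^ p in
      (x * 2 ^ n + y) * 2 ^ p + (2 * (z div 2) + (x mod 2 * (y mod 2) + z mod 2) mod 2)) =
    controlled_flip (\<lambda>q. q div 2 ^ (n + p - 1) mod 2 * (q div 2 ^ (p - 1) mod 2 ^ n mod 2))"
  proof (rule ext)
    fix c :: nat
    have "c div 2 ^ (n + p) = c div 2 ^ p div 2 ^ n"
      by (simp add: power_add div_mult2_eq[symmetric] mult.commute)
    then have "c div 2 ^ (n + p) * 2 ^ n + c div 2 ^ p mod 2 ^ n = c div 2 ^ p"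
      by (simp only: div_mult_mod_eq)
    then show "(let x = c div 2 ^ (n + p); y = c div 2 ^ p mod 2 ^ n; z = c mod 2 ^ p in
        (x * 2 ^ n + y) * 2 ^ p + (2 * (z div 2) + (x mod 2 * (y mod 2) + z mod 2) mod 2)) =
      controlled_flip (\<lambda>q. q div 2 ^ (n + p - 1) mod 2 * (q div 2 ^ (p - 1) mod 2 ^ n mod 2)) c"
      by (simp only: Let_def controlled_flip_def add.assoc[symmetric] two_pow_div_mod_split[OF assms]
          div_two_pow_pos[OF assms, symmetric] div_two_pow_pos[OF np, symmetric])
  qed
  then show ?thesis by (simp only: Tof_g_def)
qed

lemma kron_one_mat_two:
  "kron (1\<^sub>m k) (mat 2 2 (\<lambda>(r, c). M r c)) =
    mat (k * 2) (k * 2) (\<lambda>(r, c). if r div 2 = c div 2 then M (r mod 2) (c mod 2) else 0)"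
  by (rule eq_matI) (auto simp: div_mod_less_mult)

definition hadamard :: "complex mat" where
  "hadamard = mat 2 2 (\<lambda>(r, c). if r = c then (-1) ^ c / complex_of_real (sqrt 2) else 1 / complex_of_real (sqrt 2))"

definition sqrt_not :: "complex mat" where
  "sqrt_not = mat 2 2 (\<lambda>(r, c). if r = c then (1 - \<i>) / 2 else (1 + \<i>) / 2)"

lemma SqrtI_g_kron: "SqrtI_g (Suc k) = kron (1\<^sub>m (2 ^ k)) hadamard"
  unfolding SqrtI_g_def hadamard_def kron_one_mat_two by (simp add: mult.commute)

lemma SqrtNOT_g_kron: "SqrtNOT_g (Suc k) = kron (1\<^sub>m (2 ^ k)) sqrt_not"
  unfolding SqrtNOT_g_def sqrt_not_def kron_one_mat_two by (simp add: mult.commute)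

lemma unitary_mat_two:
  assumes "U \<in> carrier_mat 2 2"
    and "\<And>i j. i < 2 \<Longrightarrow> j < 2 \<Longrightarrow>
      cnj (U $$ (0, i)) * U $$ (0, j) + cnj (U $$ (1, i)) * U $$ (1, j) = (if i = j then 1 else 0)"
  shows "unitary_mat 2 U"
proof (rule unitary_matI)
  show "adj U * U = 1\<^sub>m 2"
    using assms by (intro eq_matI) (auto simp: scalar_prod_def numeral_2_eq_2)
qed (fact assms(1))

lemma unitary_hadamard: "unitary_mat 2 hadamard"
proof (rule unitary_mat_two)
  have "complex_of_real (sqrt 2) * complex_of_real (sqrt 2) = 2"
    by (simp flip: of_real_mult)
  then show "cnj (hadamard $$ (0, i)) * hadamard $$ (0, j) + cnj (hadamard $$ (1, i)) * hadamard $$ (1, j) =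
      (if i = j then 1 else 0)" if "i < 2" "j < 2" for i j
    using that by (auto simp: hadamard_def less_2_cases_iff field_simps)
qed (simp add: hadamard_def)

lemma unitary_sqrt_not: "unitary_mat 2 sqrt_not"
proof (rule unitary_mat_two)
  show "cnj (sqrt_not $$ (0, i)) * sqrt_not $$ (0, j) + cnj (sqrt_not $$ (1, i)) * sqrt_not $$ (1, j) =
      (if i = j then 1 else 0)" if "i < 2" "j < 2" for i j
    using that by (auto simp: sqrt_not_def less_2_cases_iff field_simps complex_eq_iff)
qed (simp add: sqrt_not_def)

lemma At_pos: "0 < At \<beta>"
  by (induction \<beta>) simp_all

lemma unitary_local_gate:
  assumes T: "unitary_mat 2 T"
  shows "unitary_mat (2 ^ At \<beta>) (local_gate T \<beta>)"
proof -
  have kron_id: "unitary_mat (2 ^ Suc k) (kron (1\<^sub>m (2 ^ k)) U)" if "unitary_mat 2 U" for k U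
    using unitary_mat_kron[OF unitary_mat_one that, of "2 ^ k"] by (simp add: mult.commute)
  show ?thesis
  proof (cases \<beta>)
    case (SqId a)
    obtain k where "At a = Suc k" using At_pos[of a] gr0_implies_Suc by blast
    then show ?thesis
      using SqId unitary_mat_persp[OF T kron_id[OF unitary_hadamard, of k]] by (simp add: SqrtI_g_kron)
  next
    case (SqNeg a)
    obtain k where "At a = Suc k" using At_pos[of a] gr0_implies_Suc by blast
    then show ?thesis
      using SqNeg unitary_mat_persp[OF T kron_id[OF unitary_sqrt_not, of k]] by (simp add: SqrtNOT_g_kron)
  qed (simp_all add: At_pos unitary_mat_persp[OF T] unitary_mat_one unitary_controlled_flip
      NOT_g_controlled_flip XOR_g_controlled_flip Tof_g_controlled_flip)
qed

section \<open>Partial traces\<close>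

definition ptrace_left :: "nat \<Rightarrow> nat \<Rightarrow> complex mat \<Rightarrow> complex mat" where
  "ptrace_left P M \<rho> = mat M M (\<lambda>(x, y). \<Sum>a<P. \<rho> $$ (a * M + x, a * M + y))"

definition ptrace_right :: "nat \<Rightarrow> nat \<Rightarrow> complex mat \<Rightarrow> complex mat" where
  "ptrace_right M P \<rho> = mat M M (\<lambda>(x, y). \<Sum>b<P. \<rho> $$ (x * P + b, y * P + b))"

lemma app_gate_index:
  assumes "G \<in> carrier_mat n n" "\<rho> \<in> carrier_mat n n" "r < n" "s < n"
  shows "app_gate G \<rho> $$ (r, s) = (\<Sum>p<n. \<Sum>q<n. G $$ (r, p) * \<rho> $$ (p, q) * cnj (G $$ (s, q)))"
proof -
  have "app_gate G \<rho> $$ (r, s) = (\<Sum>q<n. \<Sum>p<n. G $$ (r, p) * \<rho> $$ (p, q) * cnj (G $$ (s, q)))"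
    using assms by (simp add: app_gate_def scalar_prod_def lessThan_atLeast0 sum_distrib_right)
  also have "\<dots> = (\<Sum>p<n. \<Sum>q<n. G $$ (r, p) * \<rho> $$ (p, q) * cnj (G $$ (s, q)))"
    by (rule sum.swap)
  finally show ?thesis .
qed

lemma unitary_mat_sum_conj:
  assumes "unitary_mat P U"
  shows "(\<Sum>a<P. \<Sum>p<P. \<Sum>q<P. U $$ (a, p) * cnj (U $$ (a, q)) * h p q) = (\<Sum>p<P. h p p)"
proof -
  have "(\<Sum>a<P. \<Sum>p<P. \<Sum>q<P. U $$ (a, p) * cnj (U $$ (a, q)) * h p q) =
      (\<Sum>p<P. \<Sum>q<P. \<Sum>a<P. U $$ (a, p) * cnj (U $$ (a, q)) * h p q)"
    by (subst sum.swap) (intro sum.cong refl sum.swap)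
  also have "\<dots> = (\<Sum>p<P. \<Sum>q<P. if p = q then h p q else 0)"
    by (intro sum.cong refl) (simp add: sum_distrib_right[symmetric] unitary_mat_cols_orthonormal[OF assms])
  finally show ?thesis by (simp add: sum.delta)
qed

lemma ptrace_left_app_gate_kron:
  assumes U: "unitary_mat P U" and V: "V \<in> carrier_mat M M" and \<rho>: "\<rho> \<in> carrier_mat (P * M) (P * M)"
  shows "ptrace_left P M (app_gate (kron U V) \<rho>) = app_gate V (ptrace_left P M \<rho>)"
proof (rule eq_matI)
  fix x y assume "x < dim_row (app_gate V (ptrace_left P M \<rho>))" "y < dim_col (app_gate V (ptrace_left P M \<rho>))"
  then have x: "x < M" and y: "y < M" using V by (simp_all add: app_gate_def ptrace_left_def)
  have Uc: "U \<in> carrier_mat P P" using U by (simp add: unitary_mat_def)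
  define h where "h p1 q1 = (\<Sum>p2<M. \<Sum>q2<M. V $$ (x, p2) * \<rho> $$ (p1 * M + p2, q1 * M + q2) * cnj (V $$ (y, q2)))"
    for p1 q1
  have entry: "app_gate (kron U V) \<rho> $$ (a * M + x, a * M + y) =
      (\<Sum>p1<P. \<Sum>q1<P. U $$ (a, p1) * cnj (U $$ (a, q1)) * h p1 q1)" if a: "a < P" for a
  proof -
    have "app_gate (kron U V) \<rho> $$ (a * M + x, a * M + y) =
        (\<Sum>p<P * M. \<Sum>q<P * M. kron U V $$ (a * M + x, p) * \<rho> $$ (p, q) * cnj (kron U V $$ (a * M + y, q)))"
      using Uc V \<rho> a x y by (intro app_gate_index) (auto intro: mult_add_less_mult)
    also have "\<dots> = (\<Sum>p1<P. \<Sum>p2<M. \<Sum>q1<P. \<Sum>q2<M. U $$ (a, p1) * cnj (U $$ (a, q1)) *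
        (V $$ (x, p2) * \<rho> $$ (p1 * M + p2, q1 * M + q2) * cnj (V $$ (y, q2))))"
      unfolding sum_lessThan_mult using Uc V a x y
      by (intro sum.cong refl) (simp add: mult_add_less_mult mult_add_div_mod)
    also have "\<dots> = (\<Sum>p1<P. \<Sum>q1<P. U $$ (a, p1) * cnj (U $$ (a, q1)) * h p1 q1)"
      unfolding h_def sum_distrib_left by (intro sum.cong refl sum.swap)
    finally show ?thesis .
  qed
  have "ptrace_left P M (app_gate (kron U V) \<rho>) $$ (x, y) =
      (\<Sum>a<P. \<Sum>p1<P. \<Sum>q1<P. U $$ (a, p1) * cnj (U $$ (a, q1)) * h p1 q1)"
    using x y entry by (simp add: ptrace_left_def)
  also have "\<dots> = (\<Sum>p<P. h p p)"
    by (rule unitary_mat_sum_conj[OF U])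
  also have "\<dots> = (\<Sum>p2<M. \<Sum>q2<M. \<Sum>p1<P. V $$ (x, p2) * \<rho> $$ (p1 * M + p2, p1 * M + q2) * cnj (V $$ (y, q2)))"
    unfolding h_def by (subst sum.swap) (intro sum.cong refl sum.swap)
  also have "\<dots> = app_gate V (ptrace_left P M \<rho>) $$ (x, y)"
    using V x y by (subst app_gate_index) (auto simp: ptrace_left_def sum_distrib_left sum_distrib_right)
  finally show "ptrace_left P M (app_gate (kron U V) \<rho>) $$ (x, y) = app_gate V (ptrace_left P M \<rho>) $$ (x, y)" .
qed (use V in \<open>simp_all add: app_gate_def ptrace_left_def\<close>)

lemma sum_swap_pairs:
  "(\<Sum>p1\<in>A. \<Sum>p2\<in>B. \<Sum>q1\<in>A. \<Sum>q2\<in>B. f p1 p2 q1 q2) = (\<Sum>p2\<in>B. \<Sum>q2\<in>B. \<Sum>p1\<in>A. \<Sum>q1\<in>A. f p1 p2 q1 q2)"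
proof -
  have "(\<Sum>p1\<in>A. \<Sum>p2\<in>B. \<Sum>q1\<in>A. \<Sum>q2\<in>B. f p1 p2 q1 q2) = (\<Sum>p2\<in>B. \<Sum>p1\<in>A. \<Sum>q1\<in>A. \<Sum>q2\<in>B. f p1 p2 q1 q2)"
    by (rule sum.swap)
  also have "\<dots> = (\<Sum>p2\<in>B. \<Sum>p1\<in>A. \<Sum>q2\<in>B. \<Sum>q1\<in>A. f p1 p2 q1 q2)"
    by (rule sum.cong[OF refl], rule sum.cong[OF refl], rule sum.swap)
  also have "\<dots> = (\<Sum>p2\<in>B. \<Sum>q2\<in>B. \<Sum>p1\<in>A. \<Sum>q1\<in>A. f p1 p2 q1 q2)"
    by (rule sum.cong[OF refl], rule sum.swap)
  finally show ?thesis .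
qed

lemma ptrace_right_app_gate_kron:
  assumes U: "unitary_mat P U" and V: "V \<in> carrier_mat M M" and \<rho>: "\<rho> \<in> carrier_mat (M * P) (M * P)"
  shows "ptrace_right M P (app_gate (kron V U) \<rho>) = app_gate V (ptrace_right M P \<rho>)"
proof (rule eq_matI)
  fix x y assume "x < dim_row (app_gate V (ptrace_right M P \<rho>))" "y < dim_col (app_gate V (ptrace_right M P \<rho>))"
  then have x: "x < M" and y: "y < M" using V by (simp_all add: app_gate_def ptrace_right_def)
  have Uc: "U \<in> carrier_mat P P" using U by (simp add: unitary_mat_def)
  define h where "h p2 q2 = (\<Sum>p1<M. \<Sum>q1<M. V $$ (x, p1) * \<rho> $$ (p1 * P + p2, q1 * P + q2) * cnj (V $$ (y, q1)))"
    for p2 q2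
  have entry: "app_gate (kron V U) \<rho> $$ (x * P + b, y * P + b) =
      (\<Sum>p2<P. \<Sum>q2<P. U $$ (b, p2) * cnj (U $$ (b, q2)) * h p2 q2)" if b: "b < P" for b
  proof -
    have "app_gate (kron V U) \<rho> $$ (x * P + b, y * P + b) =
        (\<Sum>p<M * P. \<Sum>q<M * P. kron V U $$ (x * P + b, p) * \<rho> $$ (p, q) * cnj (kron V U $$ (y * P + b, q)))"
      using Uc V \<rho> b x y by (intro app_gate_index) (auto intro: mult_add_less_mult)
    also have "\<dots> = (\<Sum>p1<M. \<Sum>p2<P. \<Sum>q1<M. \<Sum>q2<P. U $$ (b, p2) * cnj (U $$ (b, q2)) *
        (V $$ (x, p1) * \<rho> $$ (p1 * P + p2, q1 * P + q2) * cnj (V $$ (y, q1))))"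
      unfolding sum_lessThan_mult using Uc V b x y
      by (intro sum.cong refl) (simp add: mult_add_less_mult mult_add_div_mod)
    also have "\<dots> = (\<Sum>p2<P. \<Sum>q2<P. U $$ (b, p2) * cnj (U $$ (b, q2)) * h p2 q2)"
      unfolding h_def sum_distrib_left by (rule sum_swap_pairs)
    finally show ?thesis .
  qed
  have "ptrace_right M P (app_gate (kron V U) \<rho>) $$ (x, y) =
      (\<Sum>b<P. \<Sum>p2<P. \<Sum>q2<P. U $$ (b, p2) * cnj (U $$ (b, q2)) * h p2 q2)"
    using x y entry by (simp add: ptrace_right_def)
  also have "\<dots> = (\<Sum>p<P. h p p)"
    by (rule unitary_mat_sum_conj[OF U])
  also have "\<dots> = (\<Sum>p1<M. \<Sum>q1<M. \<Sum>p2<P. V $$ (x, p1) * \<rho> $$ (p1 * P + p2, q1 * P + p2) * cnj (V $$ (y, q1)))"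
    unfolding h_def by (subst sum.swap) (intro sum.cong refl sum.swap)
  also have "\<dots> = app_gate V (ptrace_right M P \<rho>) $$ (x, y)"
    using V x y by (subst app_gate_index) (auto simp: ptrace_right_def sum_distrib_left sum_distrib_right)
  finally show "ptrace_right M P (app_gate (kron V U) \<rho>) $$ (x, y) = app_gate V (ptrace_right M P \<rho>) $$ (x, y)" .
qed (use V in \<open>simp_all add: app_gate_def ptrace_right_def\<close>)

lemma ptrace_outer_app_gate_kron:
  assumes U: "unitary_mat PA U" and W: "unitary_mat PB W" and G: "G \<in> carrier_mat D D"
    and \<rho>: "\<rho> \<in> carrier_mat (PA * (D * PB)) (PA * (D * PB))"
  shows "ptrace_right D PB (ptrace_left PA (D * PB) (app_gate (kron U (kron G W)) \<rho>)) =
    app_gate G (ptrace_right D PB (ptrace_left PA (D * PB) \<rho>))"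
proof -
  have "kron G W \<in> carrier_mat (D * PB) (D * PB)"
    using G W by (auto simp: unitary_mat_def)
  then show ?thesis
    using ptrace_left_app_gate_kron[OF U _ \<rho>] ptrace_right_app_gate_kron[OF W G]
    by (simp add: ptrace_left_def)
qed

section \<open>Reduced states of contiguous blocks\<close>

lemma tuples_list_all2: "tuples ds = {xs. list_all2 (\<lambda>x d. x < d) xs ds}"
  by (auto simp: tuples_def list_all2_conv_all_nth)

lemma tuples_Nil [simp]: "tuples [] = {[]}"
  by (simp add: tuples_list_all2)

lemma Cons_in_tuples_iff [simp]: "x # xs \<in> tuples (d # ds) \<longleftrightarrow> x < d \<and> xs \<in> tuples ds"
  by (simp add: tuples_list_all2)

lemma in_tuples_Cons_iff: "xs \<in> tuples (d # ds) \<longleftrightarrow> (\<exists>y ys. xs = y # ys \<and> y < d \<and> ys \<in> tuples ds)"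
  by (cases xs) (simp_all add: tuples_list_all2)

lemma in_tuples_append_iff:
  "xs \<in> tuples (ds1 @ ds2) \<longleftrightarrow> (\<exists>p s. xs = p @ s \<and> p \<in> tuples ds1 \<and> s \<in> tuples ds2)"
  by (auto simp: tuples_list_all2 list_all2_append2 list_all2_append dest: list_all2_lengthD)

lemma append_in_tuples: "p \<in> tuples ds1 \<Longrightarrow> s \<in> tuples ds2 \<Longrightarrow> p @ s \<in> tuples (ds1 @ ds2)"
  by (auto simp: in_tuples_append_iff)

lemma length_tuples: "xs \<in> tuples ds \<Longrightarrow> length xs = length ds"
  by (simp add: tuples_def)

lemma enc_append:
  assumes "length ds1 = length xs1" "length ds2 = length xs2"
  shows "enc (ds1 @ ds2) (xs1 @ xs2) = enc ds1 xs1 * prod_list ds2 + enc ds2 xs2"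
proof -
  let ?F = "\<lambda>acc (d, x). acc * d + x"
  have foldl_enc: "foldl ?F acc (zip ds xs) = acc * prod_list ds + enc ds xs"
    if "length ds = length xs" for acc ds xs
    using that
  proof (induction ds arbitrary: xs acc)
    case (Cons d ds)
    then obtain x xs' where xs: "xs = x # xs'" "length ds = length xs'" by (cases xs) auto
    then have "enc (d # ds) xs = x * prod_list ds + enc ds xs'"
      using Cons.IH[of xs' x] by (simp add: enc_def[of "d # ds"])
    with xs Cons.IH[of xs' "acc * d + x"] show ?case by (simp add: algebra_simps)
  qed (simp add: enc_def)
  have "enc (ds1 @ ds2) (xs1 @ xs2) = foldl ?F (enc ds1 xs1) (zip ds2 xs2)"
    using assms(1) by (simp add: enc_def[of "ds1 @ ds2"] enc_def[of ds1])
  then show ?thesis using foldl_enc[OF assms(2)] by simp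
qed

lemma enc_Cons: "length ds = length xs \<Longrightarrow> enc (d # ds) (x # xs) = x * prod_list ds + enc ds xs"
  using enc_append[of "[d]" "[x]" ds xs] by (simp add: enc_def)

lemma enc_less: "xs \<in> tuples ds \<Longrightarrow> enc ds xs < prod_list ds"
proof (induction ds arbitrary: xs)
  case (Cons d ds)
  then obtain y ys where "xs = y # ys" "y < d" "ys \<in> tuples ds"
    by (auto simp: in_tuples_Cons_iff)
  with Cons.IH show ?case
    using mult_add_less_mult[of y d "enc ds ys" "prod_list ds"] by (simp add: enc_Cons length_tuples)
qed (simp add: enc_def)

lemma enc_bij: "bij_betw (enc ds) (tuples ds) {..<prod_list ds}"
proof (induction ds)
  case Nil
  then show ?case by (auto simp: enc_def bij_betw_def)
next
  case (Cons d ds)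
  let ?P = "prod_list ds"
  have enc: "enc (d # ds) (y # ys) = y * ?P + enc ds ys" if "ys \<in> tuples ds" for y ys
    using that by (simp add: enc_Cons length_tuples)
  have "inj_on (enc (d # ds)) (tuples (d # ds))"
  proof (rule inj_onI)
    fix xs zs assume "xs \<in> tuples (d # ds)" "zs \<in> tuples (d # ds)" "enc (d # ds) xs = enc (d # ds) zs"
    then obtain y ys z zs' where xz: "xs = y # ys" "zs = z # zs'" "ys \<in> tuples ds" "zs' \<in> tuples ds"
      and eq: "y * ?P + enc ds ys = z * ?P + enc ds zs'"
      by (auto simp: in_tuples_Cons_iff enc)
    have "y = z" "enc ds ys = enc ds zs'"
      using eq mult_add_div_mod[OF enc_less[OF xz(3)], of y] mult_add_div_mod[OF enc_less[OF xz(4)], of z]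
      by simp_all
    then show "xs = zs"
      using xz bij_betw_imp_inj_on[OF Cons.IH] by (auto dest: inj_onD)
  qed
  moreover have "enc (d # ds) ` tuples (d # ds) = {..<d * ?P}"
  proof (intro equalityI subsetI)
    fix n assume "n \<in> enc (d # ds) ` tuples (d # ds)"
    then show "n \<in> {..<d * ?P}"
      by (auto dest: enc_less)
  next
    fix n assume "n \<in> {..<d * ?P}"
    then have "n div ?P < d" "n mod ?P < ?P" by (simp_all add: div_mod_less_mult)
    moreover obtain ys where "ys \<in> tuples ds" "enc ds ys = n mod ?P"
      using bij_betw_imp_surj_on[OF Cons.IH] \<open>n mod ?P < ?P\<close> by (metis imageE lessThan_iff)
    ultimately have "n div ?P # ys \<in> tuples (d # ds)" "enc (d # ds) (n div ?P # ys) = n"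
      by (simp_all add: enc)
    then show "n \<in> enc (d # ds) ` tuples (d # ds)" by (metis image_eqI)
  qed
  ultimately show ?case by (simp add: bij_betw_def)
qed

lemma map_nth_upt: "k + m \<le> length xs \<Longrightarrow> map (\<lambda>l. xs ! l) [k..<k + m] = take m (drop k xs)"
  by (rule nth_equalityI) auto

lemma nth_eq_outside_iff:
  assumes len: "length xs = length ys"
  shows "(\<forall>l<length xs. l \<notin> set [k..<k + m] \<longrightarrow> xs ! l = ys ! l) \<longleftrightarrow>
    take k xs = take k ys \<and> drop (k + m) xs = drop (k + m) ys"
proof
  assume H: "\<forall>l<length xs. l \<notin> set [k..<k + m] \<longrightarrow> xs ! l = ys ! l"
  show "take k xs = take k ys \<and> drop (k + m) xs = drop (k + m) ys"
    using H len by (auto intro!: nth_equalityI)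
next
  assume eq: "take k xs = take k ys \<and> drop (k + m) xs = drop (k + m) ys"
  show "\<forall>l<length xs. l \<notin> set [k..<k + m] \<longrightarrow> xs ! l = ys ! l"
  proof (intro allI impI)
    fix l assume l: "l < length xs" "l \<notin> set [k..<k + m]"
    then consider "l < k" | "k + m \<le> l" by fastforce
    then show "xs ! l = ys ! l"
    proof cases
      case 1
      then show ?thesis using eq by (metis nth_take)
    next
      case 2
      then have "xs ! l = drop (k + m) xs ! (l - (k + m))" "ys ! l = drop (k + m) ys ! (l - (k + m))"
        using l len by simp_all
      then show ?thesis using eq by simp
    qed
  qed
qed

lemma block_pairs_eq_image:
  fixes pre blk suf :: "nat list"
  assumes ta: "ta \<in> tuples blk" and tb: "tb \<in> tuples blk"
  defines "J \<equiv> [length pre..<length pre + length blk]"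
  shows "{(xs, ys). xs \<in> tuples (pre @ blk @ suf) \<and> ys \<in> tuples (pre @ blk @ suf) \<and>
      (\<forall>l<length (pre @ blk @ suf). l \<notin> set J \<longrightarrow> xs ! l = ys ! l) \<and>
      enc blk (map (\<lambda>l. xs ! l) J) = enc blk ta \<and> enc blk (map (\<lambda>l. ys ! l) J) = enc blk tb} =
    (\<lambda>(p, s). (p @ ta @ s, p @ tb @ s)) ` (tuples pre \<times> tuples suf)"
    (is "?S = ?I")
proof (rule equalityI)
  have block: "map (\<lambda>l. (p @ t @ s) ! l) J = t" if "length p = length pre" "length t = length blk" for p t s :: "nat list"
    using that by (simp add: J_def map_nth_upt)
  have outside: "(\<forall>l<length (pre @ blk @ suf). l \<notin> set J \<longrightarrow> (p @ t @ s) ! l = (p' @ t' @ s') ! l) \<longleftrightarrow>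
      p = p' \<and> s = s'"
    if "p \<in> tuples pre" "t \<in> tuples blk" "s \<in> tuples suf" "p' \<in> tuples pre" "t' \<in> tuples blk" "s' \<in> tuples suf"
    for p t s p' t' s'
    using that nth_eq_outside_iff[of "p @ t @ s" "p' @ t' @ s'" "length pre" "length blk"]
    by (simp add: J_def length_tuples)
  have enc_inj: "t = t'" if "t \<in> tuples blk" "t' \<in> tuples blk" "enc blk t = enc blk t'" for t t'
    using that bij_betw_imp_inj_on[OF enc_bij] by (auto dest: inj_onD)
  show "?S \<subseteq> ?I"
  proof (rule subsetI)
    fix z assume z: "z \<in> ?S"
    obtain xs ys where xsys: "z = (xs, ys)" by (cases z)
    from z obtain p t s p' t' s' where xs: "xs = p @ t @ s" "p \<in> tuples pre" "t \<in> tuples blk" "s \<in> tuples suf"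
      and ys: "ys = p' @ t' @ s'" "p' \<in> tuples pre" "t' \<in> tuples blk" "s' \<in> tuples suf"
      and rest: "\<forall>l<length (pre @ blk @ suf). l \<notin> set J \<longrightarrow> xs ! l = ys ! l"
        "enc blk (map (\<lambda>l. xs ! l) J) = enc blk ta" "enc blk (map (\<lambda>l. ys ! l) J) = enc blk tb"
      unfolding xsys by (auto simp: in_tuples_append_iff)
    have "p = p' \<and> s = s'"
      using outside[OF xs(2-4) ys(2-4)] rest(1) xs(1) ys(1) by simp
    moreover have "t = ta" "t' = tb"
      using enc_inj[OF xs(3) ta] enc_inj[OF ys(3) tb] rest(2,3) block[of p t s] block[of p' t' s'] xs ys
      by (simp_all add: length_tuples)
    ultimately have "z = (\<lambda>(p, s). (p @ ta @ s, p @ tb @ s)) (p, s)"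
      using xsys xs(1) ys(1) by simp
    then show "z \<in> ?I" using xs(2,4) by blast
  qed
  show "?I \<subseteq> ?S"
  proof (rule subsetI)
    fix z assume "z \<in> ?I"
    then obtain p s where z: "z = (p @ ta @ s, p @ tb @ s)" and ps: "p \<in> tuples pre" "s \<in> tuples suf"
      by auto
    then show "z \<in> ?S"
      using outside[OF ps(1) ta ps(2) ps(1) tb ps(2)] block[of p ta s] block[of p tb s] ta tb
      by (simp add: append_in_tuples length_tuples)
  qed
qed

lemma prod_list_two_pow: "prod_list (map (\<lambda>n. 2 ^ n) ns) = (2::nat) ^ sum_list ns"
  by (induction ns) (simp_all add: power_add)

lemma Red_block:
  fixes \<rho> :: "complex mat" and ns1 ns2 ns3 :: "nat list"
  defines "PA \<equiv> 2 ^ sum_list ns1" and "D \<equiv> 2 ^ sum_list ns2" and "PB \<equiv> 2 ^ sum_list ns3"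
  shows "Red (ns1 @ ns2 @ ns3) [length ns1..<length ns1 + length ns2] \<rho> =
    ptrace_right D PB (ptrace_left PA (D * PB) \<rho>)"
proof (rule eq_matI)
  define pre blk suf :: "nat list" where "pre = map (\<lambda>n. 2 ^ n) ns1" and "blk = map (\<lambda>n. 2 ^ n) ns2"
    and "suf = map (\<lambda>n. 2 ^ n) ns3"
  let ?ds = "pre @ blk @ suf"
  have ds: "map (\<lambda>n. 2 ^ n) (ns1 @ ns2 @ ns3) = ?ds" and len: "length pre = length ns1" "length blk = length ns2"
    by (simp_all add: pre_def blk_def suf_def)
  have blk: "map (\<lambda>l. ?ds ! l) [length ns1..<length ns1 + length ns2] = blk"
    by (simp add: map_nth_upt len[symmetric])
  have dims: "prod_list pre = PA" "prod_list blk = D" "prod_list suf = PB"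
    by (simp_all add: pre_def blk_def suf_def PA_def D_def PB_def prod_list_two_pow)
  fix a b assume "a < dim_row (ptrace_right D PB (ptrace_left PA (D * PB) \<rho>))"
    "b < dim_col (ptrace_right D PB (ptrace_left PA (D * PB) \<rho>))"
  then have a: "a < D" and b: "b < D" by (simp_all add: ptrace_right_def)
  obtain ta tb where ta: "ta \<in> tuples blk" "enc blk ta = a" and tb: "tb \<in> tuples blk" "enc blk tb = b"
    using a b bij_betw_imp_surj_on[OF enc_bij, of blk] dims by (metis imageE lessThan_iff)
  have "Red (ns1 @ ns2 @ ns3) [length ns1..<length ns1 + length ns2] \<rho> $$ (a, b) =
      (\<Sum>(xs, ys)\<in>(\<lambda>(p, s). (p @ ta @ s, p @ tb @ s)) ` (tuples pre \<times> tuples suf). \<rho> $$ (enc ?ds xs, enc ?ds ys))"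
    unfolding Red_def Let_def ds blk dims
    by (subst index_mat(1))
      (simp_all only: a b prod.case block_pairs_eq_image[OF ta(1) tb(1), of pre suf, unfolded len ta(2) tb(2)])
  also have "\<dots> = (\<Sum>(p, s)\<in>tuples pre \<times> tuples suf. \<rho> $$ (enc ?ds (p @ ta @ s), enc ?ds (p @ tb @ s)))"
    by (subst sum.reindex) (auto simp: inj_on_def length_tuples intro!: sum.cong)
  also have "\<dots> = (\<Sum>p\<in>tuples pre. \<Sum>s\<in>tuples suf.
      \<rho> $$ ((enc pre p * D + a) * PB + enc suf s, (enc pre p * D + b) * PB + enc suf s))"
    using ta tb by (simp add: sum.cartesian_product[symmetric] enc_append length_tuples dims algebra_simps)
  also have "\<dots> = (\<Sum>u<PA. \<Sum>s\<in>tuples suf. \<rho> $$ ((u * D + a) * PB + enc suf s, (u * D + b) * PB + enc suf s))"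
    using sum.reindex_bij_betw[OF enc_bij, of "\<lambda>u. \<Sum>s\<in>tuples suf. \<rho> $$ ((u * D + a) * PB + enc suf s,
      (u * D + b) * PB + enc suf s)" pre] by (simp add: dims)
  also have "\<dots> = (\<Sum>u<PA. \<Sum>w<PB. \<rho> $$ ((u * D + a) * PB + w, (u * D + b) * PB + w))"
    using sum.reindex_bij_betw[OF enc_bij, of "\<lambda>w. \<rho> $$ ((u * D + a) * PB + w, (u * D + b) * PB + w)" suf for u]
    by (simp add: dims)
  also have "\<dots> = (\<Sum>w<PB. \<Sum>u<PA. \<rho> $$ (u * (D * PB) + (a * PB + w), u * (D * PB) + (b * PB + w)))"
    by (subst sum.swap) (simp add: algebra_simps)
  also have "\<dots> = ptrace_right D PB (ptrace_left PA (D * PB) \<rho>) $$ (a, b)"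
    using a b by (auto simp: ptrace_right_def ptrace_left_def mult_add_less_mult intro!: sum.cong)
  finally show "Red (ns1 @ ns2 @ ns3) [length ns1..<length ns1 + length ns2] \<rho> $$ (a, b) =
    ptrace_right D PB (ptrace_left PA (D * PB) \<rho>) $$ (a, b)" .
qed (simp_all add: Red_def Let_def ptrace_right_def map_nth_upt prod_list_two_pow D_def)

lemma level_Suc: "1 \<le> i \<Longrightarrow> level \<gamma> (Suc i) = expand (level \<gamma> i)"
  unfolding level_def by (cases i) simp_all

lemma sum_At_expand1: "sum_list (map At (expand1 \<beta>)) = At \<beta>"
  by (cases \<beta>) simp_all

lemma sum_At_expand: "sum_list (map At (expand L)) = sum_list (map At L)"
  by (induction L) (simp_all add: expand_def sum_At_expand1)

lemma sum_At_level: "sum_list (map At (level \<gamma> i)) = At \<gamma>"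
proof -
  have "sum_list (map At ((expand ^^ n) [\<gamma>])) = At \<gamma>" for n
    by (induction n) (simp_all add: sum_At_expand)
  then show ?thesis by (simp add: level_def)
qed

lemma set_expand: "set (expand L) = (\<Union>\<beta>\<in>set L. set (expand1 \<beta>))"
  by (simp add: expand_def)

lemma height_nonatomic: "\<not> is_atomic \<beta> \<Longrightarrow> 2 \<le> height \<beta>"
proof -
  have "1 \<le> height \<alpha>" for \<alpha> by (cases \<alpha>) simp_all
  then show "\<not> is_atomic \<beta> \<Longrightarrow> 2 \<le> height \<beta>" by (cases \<beta>) (auto simp: le_max_iff_disj)
qed

lemma height_expand1_less: "\<not> is_atomic \<beta> \<Longrightarrow> \<alpha> \<in> set (expand1 \<beta>) \<Longrightarrow> height \<alpha> < height \<beta>"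
  by (cases \<beta>) auto

lemma height_iterated_expand:
  "\<beta> \<in> set ((expand ^^ n) [\<gamma>]) \<Longrightarrow> \<not> is_atomic \<beta> \<Longrightarrow> n + height \<beta> \<le> height \<gamma>"
proof (induction n arbitrary: \<beta>)
  case (Suc n)
  have "\<beta> \<in> set (expand ((expand ^^ n) [\<gamma>]))" using Suc.prems(1) by simp
  then obtain \<alpha> where \<alpha>: "\<alpha> \<in> set ((expand ^^ n) [\<gamma>])" "\<beta> \<in> set (expand1 \<alpha>)"
    by (auto simp: set_expand)
  moreover have "\<not> is_atomic \<alpha>"
    using \<alpha>(2) Suc.prems(2) by (cases \<alpha>) auto
  ultimately show ?case
    using Suc.IH height_expand1_less by fastforce
qed simp

lemma nonatomic_level_less_height:
  assumes "1 \<le> i" "j < length (level \<gamma> i)" "\<not> is_atomic (level \<gamma> i ! j)"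
  shows "i < height \<gamma>"
  using assms height_iterated_expand[of "level \<gamma> i ! j" "i - 1" \<gamma>] height_nonatomic[OF assms(3)]
  by (simp add: level_def)

lemma level_Suc_split:
  "1 \<le> i \<Longrightarrow> level \<gamma> i = A @ \<beta> # B \<Longrightarrow> level \<gamma> (Suc i) = expand A @ expand1 \<beta> @ expand B"
  by (simp add: level_Suc expand_def)

lemma child_pos_split: "child_pos (A @ \<beta> # B) (length A) = length (expand A)"
  by (simp add: child_pos_def expand_def)

lemma holistic_density:
  "holistic T Hol \<Longrightarrow> 1 \<le> i \<Longrightarrow> i \<le> height \<alpha> \<Longrightarrow> density (2 ^ At \<alpha>) (Hol \<alpha> i)"
  by (simp add: holistic_def)

lemma holistic_step:
  "holistic T Hol \<Longrightarrow> 1 \<le> i \<Longrightarrow> i < height \<alpha> \<Longrightarrow> Hol \<alpha> i = app_gate (level_gate T \<alpha> i) (Hol \<alpha> (Suc i))"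
  by (simp add: holistic_def)

lemma Hol_sub_eq_ctx:
  assumes H: "holistic T Hol" and occ: "(i, j) \<in> occs \<gamma> \<beta>"
  shows "Hol_sub Hol \<gamma> \<beta> = ctx Hol \<gamma> i j"
proof -
  \<comment> \<open>\<open>Hol_sub\<close> picks some occurrence; normality makes the choice irrelevant.\<close>
  obtain i' j' where p: "(SOME p. p \<in> occs \<gamma> \<beta>) = (i', j')" by force
  have "(i', j') \<in> occs \<gamma> \<beta>"
    using someI[of "\<lambda>p. p \<in> occs \<gamma> \<beta>", OF occ] p by simp
  with H occ have "ctx Hol \<gamma> i' j' = ctx Hol \<gamma> i j"
    unfolding holistic_def by blast
  then show ?thesis by (simp add: Hol_sub_def p)
qed

lemma level_gate_split:
  "level \<gamma> i = A @ \<beta> # B \<Longrightarrow> level_gate T \<gamma> i =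
    kron (kron_list (map (local_gate T) A)) (kron (local_gate T \<beta>) (kron_list (map (local_gate T) B)))"
  by (simp add: level_gate_def kron_list_append)

lemma unitary_kron_list_local_gate:
  "unitary_mat 2 T \<Longrightarrow> unitary_mat (2 ^ sum_list (map At L)) (kron_list (map (local_gate T) L))"
  using unitary_mat_kron_list[of L "\<lambda>\<beta>. 2 ^ At \<beta>" "local_gate T"] unitary_local_gate
  by (simp add: prod_list_two_pow[of "map At L", symmetric] comp_def)

lemma ctx_level_occurrence:
  assumes T: "unitary_mat 2 T" and H: "holistic T Hol"
    and i: "1 \<le> i" and hi: "i < height \<gamma>" and L: "level \<gamma> i = A @ \<beta> # B"
  defines "PA \<equiv> 2 ^ sum_list (map At A)" and "D \<equiv> 2 ^ At \<beta>" and "PB \<equiv> 2 ^ sum_list (map At B)"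
  shows "ctx Hol \<gamma> i (length A) =
    app_gate (local_gate T \<beta>) (ptrace_right D PB (ptrace_left PA (D * PB) (Hol \<gamma> (Suc i))))"
proof -
  define \<rho> where "\<rho> = Hol \<gamma> (Suc i)"
  have "2 ^ At \<gamma> = PA * (D * PB)"
    using sum_At_level[of \<gamma> i] by (simp add: L PA_def D_def PB_def flip: power_add)
  then have \<rho>: "\<rho> \<in> carrier_mat (PA * (D * PB)) (PA * (D * PB))"
    using holistic_density[OF H, of "Suc i" \<gamma>] hi by (simp add: density_def \<rho>_def)
  have G: "local_gate T \<beta> \<in> carrier_mat D D"
    using unitary_local_gate[OF T] by (simp add: D_def unitary_mat_def)
  have "ctx Hol \<gamma> i (length A) = Red (map At A @ [At \<beta>] @ map At B) [length A..<length A + length [At \<beta>]]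
      (app_gate (level_gate T \<gamma> i) \<rho>)"
    using holistic_step[OF H i hi] by (simp add: ctx_def L \<rho>_def)
  also have "\<dots> = ptrace_right D PB (ptrace_left PA (D * PB) (app_gate (level_gate T \<gamma> i) \<rho>))"
    using Red_block[of "map At A" "[At \<beta>]" "map At B"] by (simp add: PA_def D_def PB_def)
  also have "\<dots> = app_gate (local_gate T \<beta>) (ptrace_right D PB (ptrace_left PA (D * PB) \<rho>))"
    using ptrace_outer_app_gate_kron[OF unitary_kron_list_local_gate[OF T]
        unitary_kron_list_local_gate[OF T] G \<rho>[unfolded PA_def PB_def]]
    by (simp add: level_gate_split[OF L] PA_def PB_def)
  finally show ?thesis by (simp add: \<rho>_def)
qed

lemma Hol_sub_nonatomic:
  assumes T: "unitary_mat 2 T" and H: "holistic T Hol"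
    and i: "1 \<le> i" and j: "j < length (level \<gamma> i)" and na: "\<not> is_atomic (level \<gamma> i ! j)"
  defines "\<beta> \<equiv> level \<gamma> i ! j" and "k \<equiv> child_pos (level \<gamma> i) j"
  shows "Hol_sub Hol \<gamma> \<beta> =
    app_gate (local_gate T \<beta>) (Red (map At (level \<gamma> (Suc i))) [k..<k + length (expand1 \<beta>)] (Hol \<gamma> (Suc i)))"
proof -
  define A B where "A = take j (level \<gamma> i)" and "B = drop (Suc j) (level \<gamma> i)"
  have L: "level \<gamma> i = A @ \<beta> # B" and jA: "j = length A"
    using j by (simp_all add: A_def B_def \<beta>_def id_take_nth_drop)
  have hi: "i < height \<gamma>"
    using nonatomic_level_less_height[OF i j na] .
  have "Hol_sub Hol \<gamma> \<beta> = ctx Hol \<gamma> i j"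
    using Hol_sub_eq_ctx[OF H] i hi j by (simp add: occs_def \<beta>_def)
  also have "\<dots> = app_gate (local_gate T \<beta>) (ptrace_right (2 ^ At \<beta>) (2 ^ sum_list (map At B))
      (ptrace_left (2 ^ sum_list (map At A)) (2 ^ At \<beta> * 2 ^ sum_list (map At B)) (Hol \<gamma> (Suc i))))"
    unfolding jA by (rule ctx_level_occurrence[OF T H i hi L])
  also have "\<dots> = app_gate (local_gate T \<beta>) (Red (map At (level \<gamma> (Suc i))) [k..<k + length (expand1 \<beta>)] (Hol \<gamma> (Suc i)))"
    using Red_block[of "map At (expand A)" "map At (expand1 \<beta>)" "map At (expand B)" "Hol \<gamma> (Suc i)"]
    by (simp add: level_Suc_split[OF i L] k_def L jA child_pos_split sum_At_expand sum_At_expand1)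
  finally show ?thesis .
qed

theorem theorem4p9:
  fixes T :: "complex mat" and Hol :: "form \<Rightarrow> nat \<Rightarrow> complex mat" and \<gamma> :: form
  assumes "unitary_mat 2 T"
    and "holistic T Hol"
  shows
   "(\<forall>i j a1 a2 a3. 1 \<le> i \<and> j < length (level \<gamma> i) \<and> level \<gamma> i ! j = Tof a1 a2 a3 \<longrightarrow>
       (let k1 = child_pos (level \<gamma> i) j in
        Hol_sub Hol \<gamma> (Tof a1 a2 a3) =
          app_gate (persp T (At a1 + At a2 + At a3) (Tof_g (At a1) (At a2) (At a3)))
            (Red (map At (level \<gamma> (Suc i))) [k1, k1 + 1, k1 + 2] (Hol \<gamma> (Suc i))))) \<and>
    (\<forall>i j a1 a2. 1 \<le> i \<and> j < length (level \<gamma> i) \<and> level \<gamma> i ! j = Xor a1 a2 \<longrightarrow>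
       (let k1 = child_pos (level \<gamma> i) j in
        Hol_sub Hol \<gamma> (Xor a1 a2) =
          app_gate (persp T (At a1 + At a2) (XOR_g (At a1) (At a2)))
            (Red (map At (level \<gamma> (Suc i))) [k1, k1 + 1] (Hol \<gamma> (Suc i)))))"
proof (intro conjI allI impI)
  fix i j a1 a2 a3
  assume "1 \<le> i \<and> j < length (level \<gamma> i) \<and> level \<gamma> i ! j = Tof a1 a2 a3"
  then show "let k1 = child_pos (level \<gamma> i) j in
      Hol_sub Hol \<gamma> (Tof a1 a2 a3) =
        app_gate (persp T (At a1 + At a2 + At a3) (Tof_g (At a1) (At a2) (At a3)))
          (Red (map At (level \<gamma> (Suc i))) [k1, k1 + 1, k1 + 2] (Hol \<gamma> (Suc i)))"
    using Hol_sub_nonatomic[OF assms, of i j \<gamma>] by (simp add: numeral_3_eq_3)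
next
  fix i j a1 a2
  assume "1 \<le> i \<and> j < length (level \<gamma> i) \<and> level \<gamma> i ! j = Xor a1 a2"
  then show "let k1 = child_pos (level \<gamma> i) j in
      Hol_sub Hol \<gamma> (Xor a1 a2) =
        app_gate (persp T (At a1 + At a2) (XOR_g (At a1) (At a2)))
          (Red (map At (level \<gamma> (Suc i))) [k1, k1 + 1] (Hol \<gamma> (Suc i)))"
    using Hol_sub_nonatomic[OF assms, of i j \<gamma>] by (simp add: numeral_2_eq_2)
qed

end
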